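(* Let $n,k$ be positive integers with $2 \leq k \leq n-2$, and let $(\pi,\phi)$ be the decorated permutation of a positroid $M$ of rank $k$ on $[n]$. Then $M$ is sparse paving if and only if $\pi = \sigma_A (\pi_{k,n}^{top})$ for some non-adjacent $A \subseteq [n]$. In this case, $\pi$ has no fixed points (so $\phi$ is the empty function).
   Context: Positroids of rank $k$ on $[n]$: for $t\in[n]$ let $<_t$ be the order $t<_t t+1<_t\cdots<_t n<_t 1<_t\cdots<_t t-1$, extended to $k$-subsets componentwise after sorting. A Grassmann necklace is a sequence $(I_1,\dots,I_n)$ of $k$-subsets of $[n]$ with (indices mod $n$) $I_{i+1}=(I_i\setminus\{i\})\cup\{j\}$ for some $j$ if $i\in I_i$, and $I_{i+1}=I_i$ if $i\notin I_i$; its positroid has bases $\{J: I_t\leq_t J \text{ for all } t\}$, and $I_t$ is the $\leq_t$-minimal basis. A decorated permutation is a pair $(\pi,\phi)$ with $\pi$ a permutation of $[n]$ and $\phi$ a function from the fixed points of $\pi$ to $\{-1,1\}$. The decorated permutation of the positroid with necklace $(I_1,\dots,I_n)$ is: $\pi(i)=j$ if $I_{i+1}=(I_i\setminus\{i\})\cup\{j\}$ with $j\neq i$; $\pi(i)=i$, $\phi(i)=1$ if $I_{i+1}=I_i$ and $i\notin I_i$; $\pi(i)=i$, $\phi(i)=-1$ if $I_{i+1}=I_i$ and $i\in I_i$. $\pi_{k,n}^{top}$ is the permutation $i\mapsto i+k$ (mod $n$, representatives in $[n]$). For $i\in[n]$, $\sigma_i$ acts on permutations in one-line notation by exchanging the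 entries in positions $i$ and $i-1$, where $\sigma_1$ exchanges positions $1$ and $n$. A set $A\subseteq[n]$ is non-adjacent if $i\in A$ implies $i\pm1\notin A$ modulo $n$; for such $A$, $\sigma_A=\prod_{i\in A}\sigma_i$ (the factors commute). A rank-$k$ matroid is paving if every circuit has size at least $k$, and sparse paving if it and its dual are paving. *)

theory Defs
  imports Main
begin

definition cnext :: "nat \<Rightarrow> nat \<Rightarrow> nat" where
  "cnext n i = (if i = n then 1 else i + 1)"

definition cprev :: "nat \<Rightarrow> nat \<Rightarrow> nat" where
  "cprev n i = (if i = 1 then n else i - 1)"

text \<open>Position of x in the order <_t: t has rank 0, t+1 rank 1, ..., t-1 rank n-1.\<close>
definition trank :: "nat \<Rightarrow> nat \<Rightarrow> nat \<Rightarrow> nat" where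
  "trank n t x = (x + n - t) mod n"

definition tle :: "nat \<Rightarrow> nat \<Rightarrow> nat set \<Rightarrow> nat set \<Rightarrow> bool" where
  "tle n t I J =
     (let a = sorted_list_of_set (trank n t ` I); b = sorted_list_of_set (trank n t ` J)
      in length a = length b \<and> (\<forall>i < length a. a ! i \<le> b ! i))"

definition grassmann_necklace :: "nat \<Rightarrow> nat \<Rightarrow> (nat \<Rightarrow> nat set) \<Rightarrow> bool" where
  "grassmann_necklace n k I =
     (\<forall>i \<in> {1..n}. I i \<subseteq> {1..n} \<and> card (I i) = k \<and>
        (i \<in> I i \<longrightarrow> (\<exists>j \<in> {1..n}. I (cnext n i) = (I i - {i}) \<union> {j})) \<and>
        (i \<notin> I i \<longrightarrow> I (cnext n i) = I i))"

definition positroid_bases :: "nat \<Rightarrow> nat \<Rightarrow> (nat \<Rightarrow> nat set) \<Rightarrow> nat set set" where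
  "positroid_bases n k I =
     {J. J \<subseteq> {1..n} \<and> card J = k \<and> (\<forall>t \<in> {1..n}. tle n t (I t) J)}"

definition decperm_pi :: "nat \<Rightarrow> (nat \<Rightarrow> nat set) \<Rightarrow> nat \<Rightarrow> nat" where
  "decperm_pi n I i =
     (if i \<in> I i then (THE j. j \<in> I (cnext n i) \<and> I (cnext n i) = (I i - {i}) \<union> {j}) else i)"

definition decperm_phi :: "nat \<Rightarrow> (nat \<Rightarrow> nat set) \<Rightarrow> nat \<Rightarrow> int" where
  "decperm_phi n I i = (if i \<in> I i then -1 else 1)"

definition pi_top :: "nat \<Rightarrow> nat \<Rightarrow> nat \<Rightarrow> nat" where
  "pi_top k n i = (i + k - 1) mod n + 1"

definition nonadjacent :: "nat \<Rightarrow> nat set \<Rightarrow> bool" where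
  "nonadjacent n A =
     (A \<subseteq> {1..n} \<and> (\<forall>i \<in> A. cnext n i \<notin> A \<and> cprev n i \<notin> A))"

text \<open>sigma_A acting on a permutation w in one-line notation: for each i in A the entries in
  positions i and i-1 (cyclically; sigma_1 swaps positions 1 and n) are exchanged.
  For non-adjacent A these transpositions of positions are disjoint.\<close>
definition sigmaA :: "nat \<Rightarrow> nat set \<Rightarrow> (nat \<Rightarrow> nat) \<Rightarrow> nat \<Rightarrow> nat" where
  "sigmaA n A w p =
     w (if p \<in> A then cprev n p else if cnext n p \<in> A then cnext n p else p)"

definition m_indep :: "nat set set \<Rightarrow> nat set \<Rightarrow> bool" where
  "m_indep B X = (\<exists>b \<in> B. X \<subseteq> b)"

definition m_circuit :: "nat \<Rightarrow> nat set set \<Rightarrow> nat set \<Rightarrow> bool" where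
  "m_circuit n B C = (C \<subseteq> {1..n} \<and> \<not> m_indep B C \<and> (\<forall>x \<in> C. m_indep B (C - {x})))"

definition paving :: "nat \<Rightarrow> nat \<Rightarrow> nat set set \<Rightarrow> bool" where
  "paving n r B = (\<forall>C. m_circuit n B C \<longrightarrow> card C \<ge> r)"

definition dual_bases :: "nat \<Rightarrow> nat set set \<Rightarrow> nat set set" where
  "dual_bases n B = (\<lambda>b. {1..n} - b) ` B"

definition sparse_paving :: "nat \<Rightarrow> nat \<Rightarrow> nat set set \<Rightarrow> bool" where
  "sparse_paving n r B = (paving n r B \<and> paving n (n - r) (dual_bases n B))"

end

(* A matroid of rank k on [n] is sparse paving iff every (k-1)-set is independent and every
   (n-k-1)-set is coindependent, iff its non-bases are k-sets meeting pairwise in at most k - 2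
   elements. For a positroid the first condition puts the first k - 1 elements of <_t into some
   basis, hence into I_t, and dually puts I_t inside the first k + 1 elements. So every I_t is
   either the cyclic interval [t, t+k-1] or [t, t+k-2] + {t+k}. The second kind never occurs at
   consecutive t, and the steps between such sets are exactly those of sigma_A pi_top, where A
   collects the t of the second kind. Conversely the permutation sigma_A pi_top has no fixed
   points, so it determines the necklace, which is the one just described; its non-bases are the
   intervals [t, t+k-1] with t in A, and for non-adjacent A these meet pairwise in at most k - 2
   elements. *)

theory Submission
  imports Defs
begin

section \<open>The Gale order on finite sets of naturals\<close>

definition gale_le :: "nat set \<Rightarrow> nat set \<Rightarrow> bool" where
  "gale_le X Y \<longleftrightarrow> card X = card Y \<and>
     (\<forall>i < card X. sorted_list_of_set X ! i \<le> sorted_list_of_set Y ! i)"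

lemma sorted_list_of_set_lessThan_append:
  assumes "finite Y" "{..<m} \<subseteq> Y"
  shows "sorted_list_of_set Y = [0..<m] @ sorted_list_of_set (Y - {..<m})"
proof -
  have "m \<le> card Y" using card_mono[OF assms] by simp
  then show ?thesis
    using assms by (subst sorted_list_of_set_unique[symmetric]) (auto simp: sorted_wrt_append card_Diff_subset)
qed

lemma gale_le_subset_lessThan:
  assumes "gale_le X Y" "finite X" "Y \<subseteq> {..<m}"
  shows "X \<subseteq> {..<m}"
proof
  fix x assume "x \<in> X"
  then obtain i where i: "i < card X" "x = sorted_list_of_set X ! i"
    by (metis assms(2) in_set_conv_nth length_sorted_list_of_set set_sorted_list_of_set)
  have "finite Y" using assms(3) finite_subset by blast
  then have "sorted_list_of_set Y ! i \<in> Y"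
    using i(1) assms(1) by (metis gale_le_def length_sorted_list_of_set nth_mem set_sorted_list_of_set)
  then show "x \<in> {..<m}" using i assms(1,3) unfolding gale_le_def by fastforce
qed

lemma lessThan_subset_gale_le:
  assumes "gale_le X Y" "finite X" "finite Y" "{..<m} \<subseteq> Y"
  shows "{..<m} \<subseteq> X"
proof
  fix r assume r: "r \<in> {..<m}"
  have "m \<le> card Y" using card_mono[OF assms(3,4)] by simp
  then have rX: "r < card X" using r assms(1) by (simp add: gale_le_def)
  have "sorted_list_of_set Y ! r = r"
    using r by (simp add: sorted_list_of_set_lessThan_append[OF assms(3,4)] nth_append)
  then have "sorted_list_of_set X ! r \<le> r" using rX assms(1) unfolding gale_le_def by metis
  moreover have "r \<le> sorted_list_of_set X ! r"
    using rX sorted_wrt_less_idx[OF strict_sorted_list_of_set] by simp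
  ultimately show "r \<in> X"
    using rX assms(2) by (metis le_antisym length_sorted_list_of_set nth_mem set_sorted_list_of_set)
qed

lemma gale_le_lessThan:
  assumes "finite Y" "card Y = k"
  shows "gale_le {..<k} Y"
  using assms sorted_wrt_less_idx[OF strict_sorted_list_of_set, of _ Y]
  by (simp add: gale_le_def lessThan_atLeast0)

lemma gale_le_skip_iff:
  assumes "finite Y" "card Y = k" "0 < k"
  shows "gale_le (insert k {..<k-1}) Y \<longleftrightarrow> Y \<noteq> {..<k}"
proof -
  let ?l = "sorted_list_of_set Y"
  have "insert k {..<k-1} - {..<k-1} = {k}" by auto
  then have "sorted_list_of_set (insert k {..<k-1}) = [0..<k-1] @ [k]"
    by (subst sorted_list_of_set_lessThan_append) auto
  then have "gale_le (insert k {..<k-1}) Y \<longleftrightarrow> (\<forall>i<k. (if i < k - 1 then i else k) \<le> ?l ! i)"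
    using assms by (auto simp: gale_le_def nth_append)
  also have "\<dots> \<longleftrightarrow> k \<le> ?l ! (k - 1)"
  proof
    assume "k \<le> ?l ! (k - 1)"
    moreover have "i \<le> ?l ! i" if "i < k" for i
      using that assms(1,2) sorted_wrt_less_idx[OF strict_sorted_list_of_set] by simp
    ultimately show "\<forall>i<k. (if i < k - 1 then i else k) \<le> ?l ! i"
      by (metis One_nat_def Suc_pred assms(3) less_SucE)
  next
    assume "\<forall>i<k. (if i < k - 1 then i else k) \<le> ?l ! i"
    then show "k \<le> ?l ! (k - 1)" using assms(3) by (metis diff_less less_irrefl zero_less_one)
  qed
  also have "\<dots> \<longleftrightarrow> Y \<noteq> {..<k}"
  proof
    assume "k \<le> ?l ! (k - 1)"
    then show "Y \<noteq> {..<k}" using assms(3) by (auto simp: lessThan_atLeast0)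
  next
    assume "Y \<noteq> {..<k}"
    have "\<not> Y \<subseteq> {..<k}"
      using \<open>Y \<noteq> {..<k}\<close> assms(1,2) card_subset_eq[of "{..<k}" Y] by auto
    then obtain y where "y \<in> Y" "k \<le> y" by (meson lessThan_iff not_le subsetI)
    then obtain p where "p < k" "y = ?l ! p"
      by (metis assms(1,2) in_set_conv_nth length_sorted_list_of_set set_sorted_list_of_set)
    moreover have "?l ! p \<le> ?l ! (k - 1)"
      using \<open>p < k\<close> assms by (intro sorted_nth_mono) (auto simp: sorted_list_of_set.sorted_sorted_key_list_of_set)
    ultimately show "k \<le> ?l ! (k - 1)" using \<open>k \<le> y\<close> by simp
  qed
  finally show ?thesis .
qed

lemma card_between_lessThan_cases:
  assumes "{..<k-1} \<subseteq> R" "R \<subseteq> {..<k+1}" "card R = k" "0 < k"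
  shows "R = {..<k} \<or> R = insert k {..<k-1}"
proof (cases "k - 1 \<in> R")
  case True
  moreover have "{..<k} = insert (k - 1) {..<k-1}" using assms(4) by auto
  ultimately have "{..<k} \<subseteq> R" using assms(1) by simp
  then show ?thesis using assms(2,3) card_subset_eq[of R "{..<k}"] finite_subset by auto
next
  case False
  have "R \<subseteq> insert k {..<k-1}"
  proof
    fix x assume "x \<in> R"
    then have "x < k + 1" "x \<noteq> k - 1" using assms(2) False by auto
    then show "x \<in> insert k {..<k-1}" by auto
  qed
  then show ?thesis using assms(3,4) card_subset_eq[of "insert k {..<k-1}" R] by simp
qed

section \<open>Sparse paving families of bases\<close>

abbreviation ksubsets :: "nat \<Rightarrow> nat \<Rightarrow> nat set set" where
  "ksubsets n k \<equiv> {J. J \<subseteq> {1..n} \<and> card J = k}"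

lemma m_indep_subset: "m_indep B X \<Longrightarrow> Y \<subseteq> X \<Longrightarrow> m_indep B Y"
  unfolding m_indep_def by blast

lemma m_indep_if_paving:
  assumes "paving n r B" "S \<subseteq> {1..n}" "card S < r"
  shows "m_indep B S"
proof (rule ccontr)
  assume "\<not> m_indep B S"
  then obtain C where C: "C \<subseteq> S" "\<not> m_indep B C"
    and min: "\<And>D. D \<subseteq> S \<and> \<not> m_indep B D \<Longrightarrow> card C \<le> card D"
    using ex_has_least_nat[of "\<lambda>C. C \<subseteq> S \<and> \<not> m_indep B C" S card] by blast
  have finS: "finite S" using assms(2) by (rule finite_subset[OF _ finite_atLeastAtMost])
  have fin: "finite C" using C(1) finS by (rule finite_subset)
  have "m_indep B (C - {x})" if "x \<in> C" for x
  proof (rule ccontr)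
    assume "\<not> m_indep B (C - {x})"
    then have "card C \<le> card (C - {x})" using min C(1) by blast
    then show False using card_Diff1_less[OF fin that] by simp
  qed
  then have "m_circuit n B C" using C assms(2) by (auto simp: m_circuit_def)
  then have "r \<le> card C" using assms(1) by (simp add: paving_def)
  moreover have "card C \<le> card S" by (rule card_mono[OF finS C(1)])
  ultimately show False using assms(3) by simp
qed

lemma m_indep_if_nonbases_far:
  assumes "C \<subseteq> {1..n}" "card C + 1 = r" "r < n"
    and far: "pairwise (\<lambda>X Y. card (X \<inter> Y) + 2 \<le> r) N"
  shows "m_indep (ksubsets n r - N) C"
proof -
  have fin: "finite C" using assms(1) by (rule finite_subset[OF _ finite_atLeastAtMost])
  have "2 \<le> card ({1..n} - C)" using assms(1-3) fin by (simp add: card_Diff_subset)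
  then obtain D where "D \<subseteq> {1..n} - C" "card D = 2" by (rule obtain_subset_with_card_n)
  then obtain a b where ab: "a \<in> {1..n} - C" "b \<in> {1..n} - C" "a \<noteq> b"
    unfolding card_2_iff by blast
  have "insert a C \<notin> N \<or> insert b C \<notin> N"
  proof (rule ccontr)
    assume "\<not> (insert a C \<notin> N \<or> insert b C \<notin> N)"
    moreover have "insert a C \<noteq> insert b C" using ab by (metis Diff_iff insertE insertI1)
    ultimately have "card (insert a C \<inter> insert b C) + 2 \<le> r"
      using far unfolding pairwise_def by simp
    moreover have "insert a C \<inter> insert b C = C" using ab by auto
    ultimately show False using assms(2) by simp
  qed
  moreover have "insert a C \<in> ksubsets n r" "insert b C \<in> ksubsets n r"
    using ab assms(1,2) fin by auto
  ultimately show ?thesis unfolding m_indep_def by (metis DiffI subset_insertI)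
qed

lemma paving_if_nonbases_far:
  assumes "r < n" "pairwise (\<lambda>X Y. card (X \<inter> Y) + 2 \<le> r) N"
  shows "paving n r (ksubsets n r - N)"
  unfolding paving_def
proof (intro allI impI)
  fix C assume "m_circuit n (ksubsets n r - N) C"
  then have C: "C \<subseteq> {1..n}" "\<not> m_indep (ksubsets n r - N) C" by (simp_all add: m_circuit_def)
  show "r \<le> card C"
  proof (rule ccontr)
    assume "\<not> r \<le> card C"
    then have "card C \<le> r - 1" by simp
    then have "\<exists>C'. C \<subseteq> C' \<and> C' \<subseteq> {1..n} \<and> card C' = r - 1"
      by (rule exists_subset_between[OF _ _ C(1)]) (use assms(1) in simp_all)
    then obtain C' where C': "C \<subseteq> C'" "C' \<subseteq> {1..n}" "card C' = r - 1" by blast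
    have "m_indep (ksubsets n r - N) C'"
      by (rule m_indep_if_nonbases_far[OF C'(2) _ assms]) (use C'(3) \<open>\<not> r \<le> card C\<close> in simp)
    then show False using C(2) m_indep_subset[OF _ C'(1)] by blast
  qed
qed

lemma complement_image_ksubsets:
  assumes "k \<le> n"
  shows "(\<lambda>X. {1..n} - X) ` ksubsets n k = ksubsets n (n - k)"
proof (intro equalityI subsetI)
  fix Y assume "Y \<in> (\<lambda>X. {1..n} - X) ` ksubsets n k"
  then show "Y \<in> ksubsets n (n - k)" by (auto simp: card_Diff_subset finite_subset[OF _ finite_atLeastAtMost])
next
  fix Y assume Y: "Y \<in> ksubsets n (n - k)"
  then have "{1..n} - Y \<in> ksubsets n k" "Y = {1..n} - ({1..n} - Y)"
    using assms by (auto simp: card_Diff_subset finite_subset[OF _ finite_atLeastAtMost])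
  then show "Y \<in> (\<lambda>X. {1..n} - X) ` ksubsets n k" by blast
qed

lemma dual_bases_ksubsets_Diff:
  assumes "N \<subseteq> ksubsets n k" "k \<le> n"
  shows "dual_bases n (ksubsets n k - N) = ksubsets n (n - k) - (\<lambda>X. {1..n} - X) ` N"
proof -
  have "inj_on (\<lambda>X. {1..n} - X) (Pow {1..n})" by (rule inj_onI) blast
  then show ?thesis
    unfolding dual_bases_def complement_image_ksubsets[OF assms(2), symmetric]
    using assms(1) by (intro inj_on_image_set_diff[of _ "Pow {1..n}"]) auto
qed

lemma pairwise_far_complements:
  assumes "N \<subseteq> ksubsets n k" "pairwise (\<lambda>X Y. card (X \<inter> Y) + 2 \<le> k) N"
  shows "pairwise (\<lambda>X Y. card (X \<inter> Y) + 2 \<le> n - k) ((\<lambda>X. {1..n} - X) ` N)"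
  unfolding pairwise_image
proof (rule pairwiseI, rule impI)
  fix X Y assume "X \<in> N" "Y \<in> N" "X \<noteq> Y" and "{1..n} - X \<noteq> {1..n} - Y"
  then have X: "X \<subseteq> {1..n}" "card X = k" and Y: "Y \<subseteq> {1..n}" "card Y = k"
    and XY: "card (X \<inter> Y) + 2 \<le> k"
    using assms unfolding pairwise_def by blast+
  have fin: "finite X" "finite Y" using X(1) Y(1) by (simp_all add: finite_subset[OF _ finite_atLeastAtMost])
  have "({1..n} - X) \<inter> ({1..n} - Y) = {1..n} - (X \<union> Y)" by blast
  then have "card (({1..n} - X) \<inter> ({1..n} - Y)) = n - card (X \<union> Y)"
    using X(1) Y(1) fin by (simp add: card_Diff_subset)
  moreover have "card (X \<union> Y) + card (X \<inter> Y) = 2 * k" using card_Un_Int[OF fin] X(2) Y(2) by simp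
  moreover have "card (X \<union> Y) \<le> n" using card_mono[of "{1..n}" "X \<union> Y"] X(1) Y(1) by simp
  ultimately show "card (({1..n} - X) \<inter> ({1..n} - Y)) + 2 \<le> n - k" using XY by simp
qed

lemma sparse_paving_if_nonbases_far:
  assumes "N \<subseteq> ksubsets n k" "pairwise (\<lambda>X Y. card (X \<inter> Y) + 2 \<le> k) N" "0 < k" "k < n"
  shows "sparse_paving n k (ksubsets n k - N)"
  unfolding sparse_paving_def dual_bases_ksubsets_Diff[OF assms(1) less_imp_le[OF assms(4)]]
  using assms pairwise_far_complements[OF assms(1,2)] by (intro conjI paving_if_nonbases_far) auto

section \<open>Cyclic ranks and cyclic intervals\<close>

lemma cnext_mem: "t \<in> {1..n} \<Longrightarrow> cnext n t \<in> {1..n}"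
  by (auto simp: cnext_def)

lemma cprev_mem: "t \<in> {1..n} \<Longrightarrow> cprev n t \<in> {1..n}"
  by (auto simp: cprev_def)

lemma cnext_cprev: "t \<in> {1..n} \<Longrightarrow> cnext n (cprev n t) = t"
  by (auto simp: cnext_def cprev_def)

lemma trank_eq:
  assumes "t \<in> {1..n}" "x \<in> {1..n}"
  shows "trank n t x = (if t \<le> x then x - t else x + n - t)"
proof (cases "t \<le> x")
  case True
  then have "x + n - t = (x - t) + n" by simp
  then show ?thesis unfolding trank_def using True assms by (simp del: add_diff_assoc2)
qed (use assms in \<open>simp add: trank_def\<close>)

lemma trank_less: "t \<in> {1..n} \<Longrightarrow> trank n t x < n"
  by (simp add: trank_def)

lemma inj_on_trank: "t \<in> {1..n} \<Longrightarrow> inj_on (trank n t) {1..n}"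
  by (auto simp: inj_on_def trank_eq split: if_splits)

lemma trank_image: "t \<in> {1..n} \<Longrightarrow> trank n t ` {1..n} = {..<n}"
proof (rule card_subset_eq)
  assume t: "t \<in> {1..n}"
  show "trank n t ` {1..n} \<subseteq> {..<n}" using trank_less[OF t] by auto
  show "card (trank n t ` {1..n}) = card {..<n}" by (subst card_image[OF inj_on_trank[OF t]]) simp
qed simp

lemma trank_image_Collect:
  "t \<in> {1..n} \<Longrightarrow> trank n t ` {x \<in> {1..n}. P (trank n t x)} = {r. r < n \<and> P r}"
proof -
  assume t: "t \<in> {1..n}"
  have "trank n t ` {x \<in> {1..n}. P (trank n t x)} = {r \<in> trank n t ` {1..n}. P r}" by blast
  then show ?thesis using trank_image[OF t] by simp
qed

lemma trank_image_eq_iff: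
  "t \<in> {1..n} \<Longrightarrow> X \<subseteq> {1..n} \<Longrightarrow> Y \<subseteq> {1..n} \<Longrightarrow> trank n t ` X = trank n t ` Y \<longleftrightarrow> X = Y"
  by (rule inj_on_image_eq_iff[OF inj_on_trank])

lemma trank_image_subset_iff:
  assumes "t \<in> {1..n}" "X \<subseteq> {1..n}" "Y \<subseteq> {1..n}"
  shows "trank n t ` X \<subseteq> trank n t ` Y \<longleftrightarrow> X \<subseteq> Y"
proof -
  have "trank n t ` X \<subseteq> trank n t ` Y \<longleftrightarrow> trank n t ` (X \<union> Y) = trank n t ` Y"
    by (simp add: image_Un subset_Un_eq)
  also have "\<dots> \<longleftrightarrow> X \<union> Y = Y" using assms by (simp add: trank_image_eq_iff)
  finally show ?thesis by (simp add: subset_Un_eq)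
qed

lemma card_trank_image: "t \<in> {1..n} \<Longrightarrow> X \<subseteq> {1..n} \<Longrightarrow> card (trank n t ` X) = card X"
  by (rule card_image[OF inj_on_subset[OF inj_on_trank]])

lemma finite_trank_image: "X \<subseteq> {1..n} \<Longrightarrow> finite (trank n t ` X)"
  using finite_subset by blast

lemma tle_iff_gale_le: "tle n t I J \<longleftrightarrow> gale_le (trank n t ` I) (trank n t ` J)"
  by (simp add: tle_def gale_le_def Let_def)

text \<open>\<^term>\<open>cinterval n m t\<close> is the cyclic interval {t, t+1, ..., t+m-1} of [n] and
  \<^term>\<open>cinterval_skip n k t\<close> is {t, ..., t+k-2, t+k}; for k-sets they are the smallest and
  the second smallest sets in the order \<open>\<le>\<^sub>t\<close>.\<close>

definition cinterval :: "nat \<Rightarrow> nat \<Rightarrow> nat \<Rightarrow> nat set" where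
  "cinterval n m t = {x \<in> {1..n}. trank n t x < m}"

definition cinterval_skip :: "nat \<Rightarrow> nat \<Rightarrow> nat \<Rightarrow> nat set" where
  "cinterval_skip n k t = {x \<in> {1..n}. trank n t x < k - 1 \<or> trank n t x = k}"

lemma cinterval_subset: "cinterval n m t \<subseteq> {1..n}"
  by (auto simp: cinterval_def)

lemma cinterval_skip_subset: "cinterval_skip n k t \<subseteq> {1..n}"
  by (auto simp: cinterval_skip_def)

lemma trank_image_cinterval: "t \<in> {1..n} \<Longrightarrow> m \<le> n \<Longrightarrow> trank n t ` cinterval n m t = {..<m}"
proof -
  assume t: "t \<in> {1..n}" and "m \<le> n"
  have "trank n t ` cinterval n m t = {r. r < n \<and> r < m}"
    unfolding cinterval_def by (rule trank_image_Collect[OF t])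
  also have "\<dots> = {..<m}" using \<open>m \<le> n\<close> by auto
  finally show ?thesis .
qed

lemma trank_image_cinterval_skip:
  "t \<in> {1..n} \<Longrightarrow> k < n \<Longrightarrow> trank n t ` cinterval_skip n k t = insert k {..<k-1}"
proof -
  assume t: "t \<in> {1..n}" and "k < n"
  have "trank n t ` cinterval_skip n k t = {r. r < n \<and> (r < k - 1 \<or> r = k)}"
    unfolding cinterval_skip_def by (rule trank_image_Collect[OF t])
  also have "\<dots> = insert k {..<k-1}" using \<open>k < n\<close> by auto
  finally show ?thesis .
qed

lemma card_cinterval: "t \<in> {1..n} \<Longrightarrow> m \<le> n \<Longrightarrow> card (cinterval n m t) = m"
  by (metis card_lessThan card_trank_image[OF _ cinterval_subset] trank_image_cinterval)

lemma mem_cinterval: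
  "t \<in> {1..n} \<Longrightarrow> x \<in> cinterval n m t \<longleftrightarrow> x \<in> {1..n} \<and> (if t \<le> x then x - t else x + n - t) < m"
  unfolding cinterval_def using trank_eq[of t n x] by auto

lemma mem_cinterval_skip:
  "t \<in> {1..n} \<Longrightarrow> x \<in> cinterval_skip n k t \<longleftrightarrow> x \<in> {1..n} \<and>
     ((if t \<le> x then x - t else x + n - t) < k - 1 \<or> (if t \<le> x then x - t else x + n - t) = k)"
  unfolding cinterval_skip_def using trank_eq[of t n x] by auto

lemma tle_cinterval:
  assumes "t \<in> {1..n}" "k \<le> n" "J \<subseteq> {1..n}" "card J = k"
  shows "tle n t (cinterval n k t) J"
proof -
  have "card (trank n t ` J) = k" using card_trank_image[OF assms(1,3)] assms(4) by simp
  then show ?thesis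
    unfolding tle_iff_gale_le trank_image_cinterval[OF assms(1,2)]
    by (rule gale_le_lessThan[OF finite_trank_image[OF assms(3)]])
qed

lemma tle_cinterval_skip_iff:
  assumes "t \<in> {1..n}" "0 < k" "k < n" "J \<subseteq> {1..n}" "card J = k"
  shows "tle n t (cinterval_skip n k t) J \<longleftrightarrow> J \<noteq> cinterval n k t"
proof -
  have "card (trank n t ` J) = k" using card_trank_image[OF assms(1,4)] assms(5) by simp
  then have "tle n t (cinterval_skip n k t) J \<longleftrightarrow> trank n t ` J \<noteq> {..<k}"
    unfolding tle_iff_gale_le trank_image_cinterval_skip[OF assms(1,3)]
    by (rule gale_le_skip_iff[OF finite_trank_image[OF assms(4)] _ assms(2)])
  also have "{..<k} = trank n t ` cinterval n k t"
    using trank_image_cinterval[OF assms(1)] assms(3) by simp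
  finally show ?thesis
    using trank_image_eq_iff[OF assms(1,4) cinterval_subset] by simp
qed

lemma tle_subset_cinterval:
  assumes "t \<in> {1..n}" "tle n t I J" "I \<subseteq> {1..n}" "J \<subseteq> cinterval n m t"
  shows "I \<subseteq> cinterval n m t"
proof -
  have "trank n t ` J \<subseteq> {..<m}" using assms(4) unfolding cinterval_def by blast
  with assms(2) have "trank n t ` I \<subseteq> {..<m}"
    unfolding tle_iff_gale_le by (rule gale_le_subset_lessThan[OF _ finite_trank_image[OF assms(3)]])
  then show ?thesis using assms(3) unfolding cinterval_def by blast
qed

lemma cinterval_subset_tle:
  assumes "t \<in> {1..n}" "tle n t I J" "I \<subseteq> {1..n}" "J \<subseteq> {1..n}" "m \<le> n"
    and "cinterval n m t \<subseteq> J"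
  shows "cinterval n m t \<subseteq> I"
proof -
  have "{..<m} \<subseteq> trank n t ` J"
    using image_mono[OF assms(6), of "trank n t"] trank_image_cinterval[OF assms(1,5)] by simp
  with assms(2) have "{..<m} \<subseteq> trank n t ` I"
    unfolding tle_iff_gale_le
    by (rule lessThan_subset_gale_le[OF _ finite_trank_image[OF assms(3)] finite_trank_image[OF assms(4)]])
  then have "trank n t ` cinterval n m t \<subseteq> trank n t ` I"
    using trank_image_cinterval[OF assms(1,5)] by simp
  then show ?thesis
    using trank_image_subset_iff[OF assms(1) cinterval_subset assms(3)] by simp
qed

lemma cinterval_between_cases:
  assumes "t \<in> {1..n}" "0 < k" "k < n" "cinterval n (k - 1) t \<subseteq> X"
    and "X \<subseteq> cinterval n (k + 1) t" "card X = k"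
  shows "X = cinterval n k t \<or> X = cinterval_skip n k t"
proof -
  have X: "X \<subseteq> {1..n}" using assms(5) cinterval_subset by blast
  have "{..<k-1} \<subseteq> trank n t ` X"
    using image_mono[OF assms(4), of "trank n t"] trank_image_cinterval[OF assms(1)] assms(3) by simp
  moreover have "trank n t ` X \<subseteq> {..<k+1}"
    using image_mono[OF assms(5), of "trank n t"] trank_image_cinterval[OF assms(1)] assms(3) by simp
  moreover have "card (trank n t ` X) = k" using card_trank_image[OF assms(1) X] assms(6) by simp
  ultimately have "trank n t ` X = {..<k} \<or> trank n t ` X = insert k {..<k-1}"
    using card_between_lessThan_cases assms(2) by blast
  moreover have "{..<k} = trank n t ` cinterval n k t"
    using trank_image_cinterval[OF assms(1)] assms(3) by simp
  moreover have "insert k {..<k-1} = trank n t ` cinterval_skip n k t"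
    using trank_image_cinterval_skip[OF assms(1,3)] by simp
  ultimately show ?thesis
    using trank_image_eq_iff[OF assms(1) X] cinterval_subset cinterval_skip_subset by metis
qed

section \<open>Necklace steps between cyclic intervals\<close>

lemma pi_top_eq: "i \<in> {1..n} \<Longrightarrow> k < n \<Longrightarrow> pi_top k n i = (if i + k \<le> n then i + k else i + k - n)"
  by (auto simp: pi_top_def le_mod_geq)

lemma cinterval_step:
  assumes t: "t \<in> {1..n}" and k: "2 \<le> k" "k + 2 \<le> n"
  shows "cinterval n k (cnext n t) = (cinterval n k t - {t}) \<union> {pi_top k n t}"
proof -
  have "pi_top k n t = (if t + k \<le> n then t + k else t + k - n)" using pi_top_eq[OF t] k by simp
  then show ?thesis
    unfolding set_eq_iff Un_iff Diff_iff singleton_iff mem_cinterval[OF cnext_mem[OF t]] mem_cinterval[OF t]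
    using t k by (auto simp: cnext_def)
qed

lemma cinterval_to_skip_step:
  assumes t: "t \<in> {1..n}" and k: "2 \<le> k" "k + 2 \<le> n"
  shows "cinterval_skip n k (cnext n t) = (cinterval n k t - {t}) \<union> {pi_top k n (cnext n t)}"
proof -
  have "pi_top k n (cnext n t) = (if cnext n t + k \<le> n then cnext n t + k else cnext n t + k - n)"
    using pi_top_eq[OF cnext_mem[OF t]] k by simp
  then show ?thesis
    unfolding set_eq_iff Un_iff Diff_iff singleton_iff mem_cinterval_skip[OF cnext_mem[OF t]]
      mem_cinterval[OF t]
    using t k by (auto simp: cnext_def)
qed

lemma cinterval_skip_to_cinterval_step:
  assumes t: "t \<in> {1..n}" and k: "2 \<le> k" "k + 2 \<le> n"
  shows "cinterval n k (cnext n t) = (cinterval_skip n k t - {t}) \<union> {pi_top k n (cprev n t)}"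
proof -
  have "pi_top k n (cprev n t) = (if cprev n t + k \<le> n then cprev n t + k else cprev n t + k - n)"
    using pi_top_eq[OF cprev_mem[OF t]] k by simp
  then show ?thesis
    unfolding set_eq_iff Un_iff Diff_iff singleton_iff mem_cinterval[OF cnext_mem[OF t]]
      mem_cinterval_skip[OF t]
    using t k by (auto simp: cnext_def cprev_def)
qed

lemma cinterval_skip_to_skip_not_step:
  assumes t: "t \<in> {1..n}" and k: "2 \<le> k" "k + 2 \<le> n"
  shows "cinterval_skip n k (cnext n t) \<noteq> (cinterval_skip n k t - {t}) \<union> {j}"
proof
  assume eq: "cinterval_skip n k (cnext n t) = (cinterval_skip n k t - {t}) \<union> {j}"
  \<comment> \<open>the elements of t-rank k - 1 and k + 1 would both have to enter in one step\<close>
  define u where "u = (if t + k - 1 \<le> n then t + k - 1 else t + k - 1 - n)"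
  define v where "v = (if t + k + 1 \<le> n then t + k + 1 else t + k + 1 - n)"
  have "u \<in> cinterval_skip n k (cnext n t)" "u \<notin> cinterval_skip n k t - {t}"
    "v \<in> cinterval_skip n k (cnext n t)" "v \<notin> cinterval_skip n k t - {t}"
    unfolding Diff_iff mem_cinterval_skip[OF t] mem_cinterval_skip[OF cnext_mem[OF t]]
    using t k by (auto simp: u_def v_def cnext_def)
  then have "u = j" "v = j" using eq by blast+
  moreover have "u \<noteq> v" using t k by (auto simp: u_def v_def)
  ultimately show False by simp
qed

lemma trank_shift:
  assumes "s \<in> {1..n}" "t \<in> {1..n}" "x \<in> {1..n}"
  shows "trank n s x = (if trank n t s \<le> trank n t x then trank n t x - trank n t s
                        else trank n t x + n - trank n t s)"
  using assms by (auto simp: trank_eq)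

lemma card_cinterval_Int:
  assumes s: "s \<in> {1..n}" and t: "t \<in> {1..n}" and k: "2 \<le> k" "k + 2 \<le> n"
    and st: "s \<noteq> t" "s \<noteq> cnext n t" "t \<noteq> cnext n s"
  shows "card (cinterval n k s \<inter> cinterval n k t) + 2 \<le> k"
proof -
  define d where "d = trank n t s"
  have d: "2 \<le> d" "d + 2 \<le> n" using s t st by (auto simp: d_def trank_eq cnext_def split: if_splits)
  define r where "r = min d k"
  have "r - 1 \<in> trank n t ` {1..n}" "r - 2 \<in> trank n t ` {1..n}"
    using trank_image[OF t] d k by (auto simp: r_def)
  \<comment> \<open>a and b lie in the t-interval, just before s, hence outside the s-interval\<close>
  then obtain a b where a: "a \<in> {1..n}" "trank n t a = r - 1" and b: "b \<in> {1..n}" "trank n t b = r - 2"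
    by (metis imageE)
  have "a \<in> cinterval n k t" "b \<in> cinterval n k t" "a \<noteq> b"
    using a b d k by (auto simp: cinterval_def r_def)
  moreover have "trank n s a = (r - 1) + n - d" "trank n s b = (r - 2) + n - d"
    using a b d trank_shift[OF s t a(1)] trank_shift[OF s t b(1)] by (auto simp: r_def d_def)
  then have "a \<notin> cinterval n k s" "b \<notin> cinterval n k s"
    using d k by (auto simp: cinterval_def r_def min_def)
  ultimately have "cinterval n k s \<inter> cinterval n k t \<subseteq> cinterval n k t - {a, b}"
    by blast
  then have "card (cinterval n k s \<inter> cinterval n k t) \<le> card (cinterval n k t - {a, b})"
    by (rule card_mono[OF finite_subset[OF _ finite_atLeastAtMost], rotated]) (auto simp: cinterval_def)
  also have "\<dots> = k - 2"
    using \<open>a \<in> cinterval n k t\<close> \<open>b \<in> cinterval n k t\<close> \<open>a \<noteq> b\<close> card_cinterval[OF t] k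
    by (simp add: card_Diff_subset finite_subset[OF cinterval_subset])
  finally show ?thesis using k by simp
qed

section \<open>The necklace of sigma_A pi_top\<close>

text \<open>For non-adjacent A, this is the Grassmann necklace whose decorated permutation is
  sigma_A pi_top.\<close>

definition sigma_top_necklace :: "nat \<Rightarrow> nat \<Rightarrow> nat set \<Rightarrow> nat \<Rightarrow> nat set" where
  "sigma_top_necklace n k A t = (if t \<in> A then cinterval_skip n k t else cinterval n k t)"

lemma sigma_top_necklace_step:
  assumes A: "nonadjacent n A" and t: "t \<in> {1..n}" and k: "2 \<le> k" "k + 2 \<le> n"
  shows "sigma_top_necklace n k A (cnext n t)
           = (sigma_top_necklace n k A t - {t}) \<union> {sigmaA n A (pi_top k n) t}"
proof (cases "t \<in> A")
  case True
  then have "cnext n t \<notin> A" using A by (simp add: nonadjacent_def)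
  then show ?thesis
    using True cinterval_skip_to_cinterval_step[OF t k] by (simp add: sigma_top_necklace_def sigmaA_def)
next
  case False
  then show ?thesis
    using cinterval_to_skip_step[OF t k] cinterval_step[OF t k]
    by (simp add: sigma_top_necklace_def sigmaA_def)
qed

lemma self_mem_sigma_top_necklace: "t \<in> {1..n} \<Longrightarrow> 2 \<le> k \<Longrightarrow> t \<in> sigma_top_necklace n k A t"
  by (simp add: sigma_top_necklace_def cinterval_def cinterval_skip_def trank_def)

lemma sigmaA_pi_top_neq:
  assumes t: "t \<in> {1..n}" and k: "2 \<le> k" "k + 2 \<le> n"
  shows "sigmaA n A (pi_top k n) t \<noteq> t"
proof -
  have "pi_top k n i \<noteq> t" if "i \<in> {t, cnext n t, cprev n t}" for i
  proof -
    have i: "i \<in> {1..n}" using that t cnext_mem cprev_mem by blast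
    have p: "pi_top k n i = (if i + k \<le> n then i + k else i + k - n)" using pi_top_eq[OF i] k by simp
    show ?thesis unfolding p using that i t k by (auto simp: cnext_def cprev_def split: if_splits)
  qed
  then show ?thesis by (simp add: sigmaA_def)
qed

lemma decperm_pi_eqI:
  assumes I: "grassmann_necklace n k I" and t: "t \<in> {1..n}" "t \<in> I t"
    and step: "I (cnext n t) = (I t - {t}) \<union> {j}"
  shows "decperm_pi n I t = j"
proof -
  have It: "I t \<subseteq> {1..n}" "card (I (cnext n t)) = card (I t)"
    using I t(1) cnext_mem[OF t(1)] unfolding grassmann_necklace_def by auto
  have j: "j \<notin> I t - {t}"
  proof
    assume "j \<in> I t - {t}"
    then have "I (cnext n t) = I t - {t}" using step by blast
    then have "card (I (cnext n t)) < card (I t)"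
      using card_Diff1_less[OF finite_subset[OF It(1) finite_atLeastAtMost] t(2)] by simp
    with It(2) show False by simp
  qed
  have "(THE j'. j' \<in> I (cnext n t) \<and> I (cnext n t) = (I t - {t}) \<union> {j'}) = j"
  proof (rule the_equality)
    fix j' assume "j' \<in> I (cnext n t) \<and> I (cnext n t) = (I t - {t}) \<union> {j'}"
    then have "(I t - {t}) \<union> {j'} = (I t - {t}) \<union> {j}" using step by simp
    then show "j' = j" using j by (metis UnE UnI2 singletonD singletonI)
  qed (use step in simp)
  then show ?thesis using t(2) by (simp add: decperm_pi_def)
qed

lemma necklace_step_decperm_pi:
  assumes I: "grassmann_necklace n k I" and t: "t \<in> {1..n}" "t \<in> I t"
  shows "I (cnext n t) = (I t - {t}) \<union> {decperm_pi n I t}"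
proof -
  obtain j where "I (cnext n t) = (I t - {t}) \<union> {j}"
    using I t unfolding grassmann_necklace_def by blast
  then show ?thesis using decperm_pi_eqI[OF I t] by simp
qed

lemma cyclically_shrinking_empty:
  assumes shrink: "\<And>t. t \<in> {1..n} \<Longrightarrow> D (cnext n t) \<subseteq> D t - {t}"
    and "D 1 \<subseteq> {1..n}" "t \<in> {1..n}"
  shows "D t = {}"
proof -
  have below: "m \<le> n \<Longrightarrow> D m \<subseteq> D 1 - {1..<m}" if "1 \<le> m" for m
    using that
  proof (induction m rule: dec_induct)
    case (step m)
    then have "cnext n m = Suc m" by (simp add: cnext_def)
    then have "D (Suc m) \<subseteq> D m - {m}" using shrink[of m] step by simp
    also have "\<dots> \<subseteq> D 1 - {1..<m} - {m}" using step by auto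
    also have "\<dots> = D 1 - {1..<Suc m}" using step by auto
    finally show ?case .
  qed simp
  have "cnext n n = 1" by (simp add: cnext_def)
  then have "D 1 \<subseteq> D n - {n}" using shrink[of n] assms(3) by simp
  also have "\<dots> \<subseteq> D 1 - {1..n}" using below[of n] assms(3) by auto
  finally have "D 1 = {}" using assms(2) by blast
  then show ?thesis using below[of t] assms(3) by auto
qed

lemma eq_if_same_necklace_steps:
  assumes "\<And>t. t \<in> {1..n} \<Longrightarrow> I (cnext n t) = (I t - {t}) \<union> {p t}"
    and "\<And>t. t \<in> {1..n} \<Longrightarrow> J (cnext n t) = (J t - {t}) \<union> {p t}"
    and "I 1 \<subseteq> {1..n}" "J 1 \<subseteq> {1..n}" "t \<in> {1..n}"
  shows "I t = J t"
proof -
  let ?D = "\<lambda>t. (I t - J t) \<union> (J t - I t)"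
  have "?D t = {}"
    using assms by (intro cyclically_shrinking_empty[of n ?D]) auto
  then show ?thesis by blast
qed

lemma necklace_eq_sigma_top_necklace:
  assumes I: "grassmann_necklace n k I" and A: "nonadjacent n A" and k: "2 \<le> k" "k + 2 \<le> n"
    and pi: "\<forall>i \<in> {1..n}. decperm_pi n I i = sigmaA n A (pi_top k n) i"
    and t: "t \<in> {1..n}"
  shows "I t = sigma_top_necklace n k A t"
proof (rule eq_if_same_necklace_steps[OF _ sigma_top_necklace_step[OF A _ k] _ _ t])
  fix s assume s: "s \<in> {1..n}"
  have "decperm_pi n I s \<noteq> s" using pi s sigmaA_pi_top_neq[OF s k] by simp
  then have "s \<in> I s" by (meson decperm_pi_def)
  then show "I (cnext n s) = (I s - {s}) \<union> {sigmaA n A (pi_top k n) s}"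
    using necklace_step_decperm_pi[OF I s] pi s by simp
next
  show "I 1 \<subseteq> {1..n}" using I k unfolding grassmann_necklace_def by auto
  show "sigma_top_necklace n k A 1 \<subseteq> {1..n}"
    using cinterval_subset cinterval_skip_subset by (simp add: sigma_top_necklace_def)
qed

section \<open>Sparse paving positroids\<close>

lemma positroid_bases_sigma_top_necklace:
  assumes I: "\<And>t. t \<in> {1..n} \<Longrightarrow> I t = sigma_top_necklace n k A t"
    and A: "A \<subseteq> {1..n}" and k: "2 \<le> k" "k + 2 \<le> n"
  shows "positroid_bases n k I = ksubsets n k - cinterval n k ` A"
proof -
  have "tle n t (I t) J \<longleftrightarrow> (t \<in> A \<longrightarrow> J \<noteq> cinterval n k t)"
    if t: "t \<in> {1..n}" and J: "J \<in> ksubsets n k" for t J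
    using I[OF t] J k tle_cinterval[OF t] tle_cinterval_skip_iff[OF t]
    by (simp add: sigma_top_necklace_def)
  then show ?thesis
    unfolding positroid_bases_def using A by blast
qed

lemma pairwise_far_cintervals:
  assumes A: "nonadjacent n A" and k: "2 \<le> k" "k + 2 \<le> n"
  shows "pairwise (\<lambda>X Y. card (X \<inter> Y) + 2 \<le> k) (cinterval n k ` A)"
  unfolding pairwise_image
proof (rule pairwiseI, rule impI)
  fix s t assume "s \<in> A" "t \<in> A" "s \<noteq> t"
  with A have "s \<in> {1..n}" "t \<in> {1..n}" "s \<noteq> cnext n t" "t \<noteq> cnext n s"
    unfolding nonadjacent_def by blast+
  then show "card (cinterval n k s \<inter> cinterval n k t) + 2 \<le> k"
    using card_cinterval_Int k \<open>s \<noteq> t\<close> by blast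
qed

lemma sparse_paving_if_sigma_top:
  assumes I: "grassmann_necklace n k I" and A: "nonadjacent n A" and k: "2 \<le> k" "k + 2 \<le> n"
    and pi: "\<forall>i \<in> {1..n}. decperm_pi n I i = sigmaA n A (pi_top k n) i"
  shows "sparse_paving n k (positroid_bases n k I)"
proof -
  have "A \<subseteq> {1..n}" using A by (simp add: nonadjacent_def)
  then have "positroid_bases n k I = ksubsets n k - cinterval n k ` A"
    using necklace_eq_sigma_top_necklace[OF I A k pi] k
    by (intro positroid_bases_sigma_top_necklace) auto
  moreover have "cinterval n k ` A \<subseteq> ksubsets n k"
    using \<open>A \<subseteq> {1..n}\<close> k card_cinterval by (auto simp: cinterval_def)
  then have "sparse_paving n k (ksubsets n k - cinterval n k ` A)"
    by (rule sparse_paving_if_nonbases_far[OF _ pairwise_far_cintervals[OF A k]]) (use k in simp_all)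
  ultimately show ?thesis by simp
qed

lemma necklace_cases_if_sparse_paving:
  assumes I: "grassmann_necklace n k I" and sp: "sparse_paving n k (positroid_bases n k I)"
    and k: "2 \<le> k" "k + 2 \<le> n" and t: "t \<in> {1..n}"
  shows "I t = cinterval n k t \<or> I t = cinterval_skip n k t"
proof -
  let ?B = "positroid_bases n k I"
  have It: "I t \<subseteq> {1..n}" "card (I t) = k" using I t unfolding grassmann_necklace_def by auto
  have pav: "paving n k ?B" "paving n (n - k) (dual_bases n ?B)"
    using sp unfolding sparse_paving_def by auto
  have "m_indep ?B (cinterval n (k - 1) t)"
    using k card_cinterval[OF t, of "k - 1"] by (intro m_indep_if_paving[OF pav(1) cinterval_subset]) simp
  then obtain J where J: "J \<in> ?B" "cinterval n (k - 1) t \<subseteq> J" unfolding m_indep_def by blast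
  then have lower: "cinterval n (k - 1) t \<subseteq> I t"
    using t k It(1) unfolding positroid_bases_def by (intro cinterval_subset_tle[of t n "I t" J]) auto
  have "card ({1..n} - cinterval n (k + 1) t) = n - (k + 1)"
    using card_Diff_subset[OF finite_subset[OF cinterval_subset finite_atLeastAtMost] cinterval_subset]
      card_cinterval[OF t, of "k + 1"] k by simp
  then have "m_indep (dual_bases n ?B) ({1..n} - cinterval n (k + 1) t)"
    using k by (intro m_indep_if_paving[OF pav(2)]) auto
  then obtain J' where J': "J' \<in> ?B" "{1..n} - cinterval n (k + 1) t \<subseteq> {1..n} - J'"
    unfolding m_indep_def dual_bases_def by blast
  then have "J' \<subseteq> cinterval n (k + 1) t" unfolding positroid_bases_def by blast
  then have upper: "I t \<subseteq> cinterval n (k + 1) t"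
    using t J'(1) It(1) unfolding positroid_bases_def by (intro tle_subset_cinterval[of t n "I t" J']) auto
  show ?thesis using cinterval_between_cases[OF t _ _ lower upper It(2)] k by simp
qed

lemma sigma_top_if_sparse_paving:
  assumes I: "grassmann_necklace n k I" and sp: "sparse_paving n k (positroid_bases n k I)"
    and k: "2 \<le> k" "k + 2 \<le> n"
  shows "\<exists>A. nonadjacent n A \<and> (\<forall>i \<in> {1..n}. decperm_pi n I i = sigmaA n A (pi_top k n) i)"
proof -
  define A where "A = {t \<in> {1..n}. I t = cinterval_skip n k t}"
  have IA: "I t = sigma_top_necklace n k A t" if "t \<in> {1..n}" for t
    using necklace_cases_if_sparse_paving[OF I sp k that] that
    by (auto simp: A_def sigma_top_necklace_def)
  have self_mem: "t \<in> I t" if "t \<in> {1..n}" for t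
    using IA[OF that] self_mem_sigma_top_necklace[OF that k(1)] by simp
  have cnext_notin: "cnext n t \<notin> A" if "t \<in> A" for t
  proof
    assume "cnext n t \<in> A"
    moreover have t: "t \<in> {1..n}" using that by (simp add: A_def)
    ultimately have "cinterval_skip n k (cnext n t) = (cinterval_skip n k t - {t}) \<union> {decperm_pi n I t}"
      using necklace_step_decperm_pi[OF I t self_mem[OF t]] that by (simp add: A_def)
    then show False using cinterval_skip_to_skip_not_step[OF t k] by blast
  qed
  have "nonadjacent n A"
    unfolding nonadjacent_def
  proof (intro conjI ballI)
    fix t assume t: "t \<in> A"
    then show "cnext n t \<notin> A" by (rule cnext_notin)
    show "cprev n t \<notin> A"
      using cnext_notin[of "cprev n t"] cnext_cprev t by (auto simp: A_def)
  qed (auto simp: A_def)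
  moreover have "decperm_pi n I t = sigmaA n A (pi_top k n) t" if t: "t \<in> {1..n}" for t
  proof (rule decperm_pi_eqI[OF I t self_mem[OF t]])
    show "I (cnext n t) = (I t - {t}) \<union> {sigmaA n A (pi_top k n) t}"
      using sigma_top_necklace_step[OF \<open>nonadjacent n A\<close> t k] IA[OF t] IA[OF cnext_mem[OF t]] by simp
  qed
  ultimately show ?thesis by blast
qed

theorem theorem4p2:
  fixes n k :: nat and I :: "nat \<Rightarrow> nat set"
  assumes "2 \<le> k" and "k + 2 \<le> n"
    and "grassmann_necklace n k I"
  shows "(sparse_paving n k (positroid_bases n k I) \<longleftrightarrow>
            (\<exists>A. nonadjacent n A \<and>
                 (\<forall>i \<in> {1..n}. decperm_pi n I i = sigmaA n A (pi_top k n) i)))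
         \<and> (sparse_paving n k (positroid_bases n k I) \<longrightarrow>
            (\<forall>i \<in> {1..n}. decperm_pi n I i \<noteq> i))"
proof (intro conjI iffI impI)
  assume "sparse_paving n k (positroid_bases n k I)"
  then show "\<exists>A. nonadjacent n A \<and> (\<forall>i \<in> {1..n}. decperm_pi n I i = sigmaA n A (pi_top k n) i)"
    using sigma_top_if_sparse_paving assms by blast
next
  assume "\<exists>A. nonadjacent n A \<and> (\<forall>i \<in> {1..n}. decperm_pi n I i = sigmaA n A (pi_top k n) i)"
  then show "sparse_paving n k (positroid_bases n k I)"
    using sparse_paving_if_sigma_top assms by blast
next
  assume "sparse_paving n k (positroid_bases n k I)"
  then obtain A where "\<forall>i \<in> {1..n}. decperm_pi n I i = sigmaA n A (pi_top k n) i"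
    using sigma_top_if_sparse_paving assms by blast
  then show "\<forall>i \<in> {1..n}. decperm_pi n I i \<noteq> i"
    using sigmaA_pi_top_neq assms(1,2) by simp
qed

end
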